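(* Under the Setting and Algorithm in the context, suppose $$\frac{N-s+1}{2}\min_{k\in\mathcal N}\gamma_k\eta_k>D_{\mathcal X}^2+\frac12\sum_{k\in\mathcal B}\gamma_k^2L_f^2+\frac12\sum_{k\in\mathcal N}\gamma_k^2L_{g,\mathcal X}^2.$$ Then $\mathcal B\neq\emptyset$ (so $\bar x_{N,s}$ is well defined), and moreover either (i) $|\mathcal B|\ge(N-s+1)/2$, or (ii) $\sum_{k\in\mathcal B}\gamma_k\langle f'(x_k),x_k-x^*\rangle<0$.
   Context: Setting. $\mathcal X\subset\mathbb R^n$ is convex and compact; $f:\mathcal X\to\mathbb R$ is convex and $L_f$-Lipschitz; $\Delta\subset\mathbb R^d$ is compact; $g:\mathcal X\times\Delta\to\mathbb R$ is such that for every $\delta\in\Delta$, $x\mapsto g(x,\delta)$ is convex and $L_{g,\mathcal X}$-Lipschitz, and for every $x\in\mathcal X$, $\delta\mapsto g(x,\delta)$ is $L_{g,\Delta}$-Lipschitz. Let $G(x):=\max_{\delta\in\Delta}g(x,\delta)$ and assume the problem $\min_{x\in\mathcal X}\{f(x):G(x)\le0\}$ has an optimal solution $x^*$. Norms are Euclidean. $f'(x)$ denotes a subgradient of $f$ at $x$ and $g'(x,\delta)$ a subgradient of $g(\cdot,\delta)$ at $x$. Let $\omega_{\mathcal X}:\mathcal X\to\mathbb R$ be continuously differentiable and $1$-strongly convex; $V(x,z):=\omega_{\mathcal X}(z)-\omega_{\mathcal X}(x)-\langle\nabla\omega_{\mathcal X}(x),z-x\rangle$; prox-mapping $P_{x,\mathcal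 X}(y):=\arg\min_{z\in\mathcal X}\{\langle y,z\rangle+V(x,z)\}$; $D_{\mathcal X}:=\sqrt{\max_{x,z\in\mathcal X}V(x,z)}$. Algorithm (inexact CSA). Inputs: $N\ge1$, $x_1\in\mathcal X$, tolerances $\eta_k>0$, step-sizes $\gamma_k>0$. For $k=1,\dots,N$: choose some $\delta_k\in\Delta$ (an approximate maximizer of $g(x_k,\cdot)$); set $h_k=f'(x_k)$ if $g(x_k,\delta_k)\le\eta_k$ and $h_k=g'(x_k,\delta_k)$ otherwise; set $x_{k+1}=P_{x_k,\mathcal X}(\gamma_kh_k)$. For $1\le s\le N$ let $I=\{s,\dots,N\}$, $\mathcal B:=\{k\in I: g(x_k,\delta_k)\le\eta_k\}$, $\mathcal N:=I\setminus\mathcal B$, and output $\bar x_{N,s}:=\sum_{k\in\mathcal B}\gamma_kx_k/\sum_{k\in\mathcal B}\gamma_k$. (The minimum over an empty set is $+\infty$.) *)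

theory Defs
  imports "HOL-Analysis.Analysis"
begin

definition strongly_convex1_on :: "'a::real_normed_vector set \<Rightarrow> ('a \<Rightarrow> real) \<Rightarrow> bool" where
  "strongly_convex1_on S w \<longleftrightarrow>
     (\<forall>x\<in>S. \<forall>y\<in>S. \<forall>t::real. 0 \<le> t \<and> t \<le> 1 \<longrightarrow>
        w (t *\<^sub>R x + (1 - t) *\<^sub>R y)
          \<le> t * w x + (1 - t) * w y - (1/2) * t * (1 - t) * (norm (x - y))\<^sup>2)"

definition bregman :: "('a::real_inner \<Rightarrow> real) \<Rightarrow> ('a \<Rightarrow> 'a) \<Rightarrow> 'a \<Rightarrow> 'a \<Rightarrow> real" where
  "bregman w dw x z = w z - w x - dw x \<bullet> (z - x)"

definition is_prox :: "('a::real_inner \<Rightarrow> real) \<Rightarrow> ('a \<Rightarrow> 'a) \<Rightarrow> 'a set \<Rightarrow> 'a \<Rightarrow> 'a \<Rightarrow> 'a \<Rightarrow> bool" where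
  "is_prox w dw X x y p \<longleftrightarrow> p \<in> X \<and>
     (\<forall>z\<in>X. y \<bullet> p + bregman w dw x p \<le> y \<bullet> z + bregman w dw x z)"

definition Dsq :: "('a::real_inner \<Rightarrow> real) \<Rightarrow> ('a \<Rightarrow> 'a) \<Rightarrow> 'a set \<Rightarrow> real" where
  "Dsq w dw X = (SUP p \<in> X \<times> X. bregman w dw (fst p) (snd p))"

definition is_subgrad_on :: "'a::real_inner set \<Rightarrow> ('a \<Rightarrow> real) \<Rightarrow> 'a \<Rightarrow> 'a \<Rightarrow> bool" where
  "is_subgrad_on S f x v \<longleftrightarrow> (\<forall>y\<in>S. f y \<ge> f x + v \<bullet> (y - x))"

end

theory Submission
  imports Defs
begin

text \<open>
  Mirror descent with a 1-strongly convex distance-generating function satisfies the regret bound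
  \<open>\<Sum>\<^sub>k \<gamma>\<^sub>k \<langle>h\<^sub>k, x\<^sub>k - x*\<rangle> \<le> D\<^sub>X\<^sup>2 + \<Sum>\<^sub>k \<gamma>\<^sub>k\<^sup>2 \<parallel>h\<^sub>k\<parallel>\<^sup>2 / 2\<close>.
  On an infeasible step (\<open>k \<in> \<N>\<close>) the subgradient inequality for \<open>g(\<cdot>, \<delta>\<^sub>k)\<close> at the feasible
  point \<open>x*\<close> gives \<open>\<langle>h\<^sub>k, x\<^sub>k - x*\<rangle> > \<eta>\<^sub>k\<close>. If the conclusion were false, \<open>\<N>\<close> would contain at least
  half of the steps and the \<open>\<B>\<close>-part of the sum would be nonnegative, so the left-hand side
  would exceed \<open>(N - s + 1)/2 \<cdot> min\<^sub>\<N> \<gamma>\<^sub>k \<eta>\<^sub>k\<close>, contradicting the hypothesis.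
\<close>

lemma has_real_derivative_nonpos_at_left_max:
  fixes \<psi> :: "real \<Rightarrow> real"
  assumes "(\<psi> has_real_derivative l) (at 0 within {0..1})" "\<forall>t\<in>{0..1}. \<psi> t \<le> \<psi> 0"
  shows "l \<le> 0"
proof (rule ccontr)
  assume "\<not> l \<le> 0"
  then obtain d where d: "d > 0" "\<forall>h>0. 0 + h \<in> {0..1} \<longrightarrow> h < d \<longrightarrow> \<psi> 0 < \<psi> (0 + h)"
    using has_real_derivative_pos_inc_right[OF assms(1)] by fastforce
  then have "\<psi> 0 < \<psi> (min (d/2) 1)" by auto
  moreover have "\<psi> (min (d/2) 1) \<le> \<psi> 0" using assms(2) d by auto
  ultimately show False by simp
qed

lemma convex_segment_point_mem:
  assumes "convex X" "a \<in> X" "b \<in> X" "0 \<le> t" "t \<le> 1"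
  shows "a + t *\<^sub>R (b - a) \<in> X"
proof -
  have "a + t *\<^sub>R (b - a) = (1 - t) *\<^sub>R a + t *\<^sub>R b" by (simp add: algebra_simps)
  thus ?thesis using convexD[OF assms(1-3), of "1 - t" t] assms(4,5) by simp
qed

lemma has_real_derivative_along_segment:
  fixes w :: "'a::real_inner \<Rightarrow> real"
  assumes "(w has_derivative (\<lambda>h. D \<bullet> h)) (at a within X)" "convex X" "a \<in> X" "b \<in> X"
  shows "((\<lambda>t. w (a + t *\<^sub>R (b - a))) has_real_derivative D \<bullet> (b - a)) (at 0 within {0..1})"
proof -
  let ?seg = "\<lambda>t::real. a + t *\<^sub>R (b - a)"
  have seg: "(?seg has_derivative (\<lambda>t. t *\<^sub>R (b - a))) (at 0 within {0..1})"
    by (intro derivative_eq_intros) auto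
  have "?seg ` {0..1} \<subseteq> X" using convex_segment_point_mem[OF assms(2-4)] by auto
  then have "(w has_derivative (\<lambda>h. D \<bullet> h)) (at (?seg 0) within ?seg ` {0..1})"
    using has_derivative_subset[OF assms(1)] by simp
  from diff_chain_within[OF seg this]
  have "((w \<circ> ?seg) has_derivative ((\<lambda>h. D \<bullet> h) \<circ> (\<lambda>t. t *\<^sub>R (b - a)))) (at 0 within {0..1})" .
  moreover have "(\<lambda>h. D \<bullet> h) \<circ> (\<lambda>t. t *\<^sub>R (b - a)) = (*) (D \<bullet> (b - a))"
    by (auto simp: o_def fun_eq_iff)
  ultimately show ?thesis unfolding has_field_derivative_def by (simp add: o_def)
qed

lemma strongly_convex1_on_bregman_ge:
  fixes w :: "'a::real_inner \<Rightarrow> real"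
  assumes sc: "strongly_convex1_on X w" and cx: "convex X"
    and d: "(w has_derivative (\<lambda>h. dw x \<bullet> h)) (at x within X)" and x: "x \<in> X" and p: "p \<in> X"
  shows "(norm (p - x))\<^sup>2 / 2 \<le> bregman w dw x p"
proof -
  define K where "K = (norm (p - x))\<^sup>2"
  define \<psi> where "\<psi> t = w (x + t *\<^sub>R (p - x)) - t * (w p - w x) + K / 2 * (t * (1 - t))" for t
  have "(\<psi> has_real_derivative dw x \<bullet> (p - x) - (w p - w x) + K / 2 * (1 * (1 - 0) + 0 * (-1)))
      (at 0 within {0..1})"
    unfolding \<psi>_def
    by (intro derivative_eq_intros has_real_derivative_along_segment[OF d cx x p])
      (auto intro: has_real_derivative_along_segment[OF d cx x p])
  moreover have "\<forall>t\<in>{0..1}. \<psi> t \<le> \<psi> 0"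
  proof
    fix t :: real assume t: "t \<in> {0..1}"
    have "t *\<^sub>R p + (1 - t) *\<^sub>R x = x + t *\<^sub>R (p - x)" by (simp add: algebra_simps)
    moreover have "w (t *\<^sub>R p + (1 - t) *\<^sub>R x) \<le> t * w p + (1 - t) * w x - 1/2 * t * (1 - t) * K"
      using sc p x t unfolding strongly_convex1_on_def K_def by auto
    ultimately show "\<psi> t \<le> \<psi> 0" unfolding \<psi>_def by (simp add: algebra_simps)
  qed
  ultimately have "dw x \<bullet> (p - x) - (w p - w x) + K / 2 * (1 * (1 - 0) + 0 * (-1)) \<le> 0"
    by (rule has_real_derivative_nonpos_at_left_max)
  thus ?thesis unfolding bregman_def K_def by simp
qed

lemma is_prox_optimality:
  fixes w :: "'a::real_inner \<Rightarrow> real"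
  assumes cx: "convex X" and z: "z \<in> X"
    and d: "(w has_derivative (\<lambda>h. dw p \<bullet> h)) (at p within X)"
    and pr: "is_prox w dw X x y p"
  shows "0 \<le> (y + dw p - dw x) \<bullet> (z - p)"
proof -
  have p: "p \<in> X" using pr unfolding is_prox_def by blast
  define c where "c = (y - dw x) \<bullet> (z - p)"
  define \<psi> where "\<psi> t = - (t * c + w (p + t *\<^sub>R (z - p)))" for t
  have "(\<psi> has_real_derivative - (1 * c + dw p \<bullet> (z - p))) (at 0 within {0..1})"
    unfolding \<psi>_def
    by (intro derivative_eq_intros has_real_derivative_along_segment[OF d cx p z])
      (auto intro: has_real_derivative_along_segment[OF d cx p z])
  moreover have "\<forall>t\<in>{0..1}. \<psi> t \<le> \<psi> 0"
  proof
    fix t :: real assume t: "t \<in> {0..1}"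
    define q where "q = p + t *\<^sub>R (z - p)"
    have "q \<in> X" unfolding q_def using convex_segment_point_mem[OF cx p z] t by auto
    then have "y \<bullet> p + bregman w dw x p \<le> y \<bullet> q + bregman w dw x q"
      using pr unfolding is_prox_def by auto
    then have "0 \<le> y \<bullet> (q - p) + w q - w p - dw x \<bullet> (q - p)"
      unfolding bregman_def by (simp add: inner_diff_right algebra_simps)
    moreover have "q - p = t *\<^sub>R (z - p)" unfolding q_def by simp
    ultimately show "\<psi> t \<le> \<psi> 0" unfolding \<psi>_def c_def q_def
      by (simp add: inner_diff_left algebra_simps)
  qed
  ultimately have "- (1 * c + dw p \<bullet> (z - p)) \<le> 0" by (rule has_real_derivative_nonpos_at_left_max)
  thus ?thesis unfolding c_def by (simp add: inner_diff_left inner_add_left)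
qed

lemma is_prox_descent_inequality:
  fixes w :: "'a::real_inner \<Rightarrow> real"
  assumes sc: "strongly_convex1_on X w" and cx: "convex X"
    and x: "x \<in> X" and z: "z \<in> X"
    and dx: "(w has_derivative (\<lambda>h. dw x \<bullet> h)) (at x within X)"
    and dp: "(w has_derivative (\<lambda>h. dw p \<bullet> h)) (at p within X)"
    and pr: "is_prox w dw X x (\<gamma> *\<^sub>R h) p" and \<gamma>: "\<gamma> \<ge> 0"
  shows "\<gamma> * (h \<bullet> (x - z)) \<le> bregman w dw x z - bregman w dw p z + \<gamma>\<^sup>2 * (norm h)\<^sup>2 / 2"
proof -
  have p: "p \<in> X" using pr unfolding is_prox_def by blast
  \<comment> \<open>three-point identity for the Bregman distance\<close>
  have "(dw p - dw x) \<bullet> (z - p) = bregman w dw x z - bregman w dw p z - bregman w dw x p"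
    unfolding bregman_def by (simp add: inner_diff_left inner_diff_right algebra_simps)
  with is_prox_optimality[OF cx z dp pr]
  have near: "\<gamma> * (h \<bullet> (p - z)) \<le> bregman w dw x z - bregman w dw p z - bregman w dw x p"
    by (simp add: inner_add_left inner_diff_left inner_diff_right algebra_simps)
  have "\<gamma> * (h \<bullet> (x - p)) \<le> \<gamma> * (norm h * norm (x - p))"
    using \<gamma> by (intro mult_left_mono norm_cauchy_schwarz)
  also have "\<dots> \<le> \<gamma>\<^sup>2 * (norm h)\<^sup>2 / 2 + (norm (p - x))\<^sup>2 / 2"
    using sum_squares_ge_zero[of "\<gamma> * norm h - norm (x - p)" 0]
    by (simp add: power2_eq_square algebra_simps norm_minus_commute)
  also have "\<dots> \<le> \<gamma>\<^sup>2 * (norm h)\<^sup>2 / 2 + bregman w dw x p"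
    using strongly_convex1_on_bregman_ge[where dw = dw, OF sc cx dx x p] by simp
  finally have far: "\<gamma> * (h \<bullet> (x - p)) \<le> \<gamma>\<^sup>2 * (norm h)\<^sup>2 / 2 + bregman w dw x p" .
  have "\<gamma> * (h \<bullet> (x - z)) = \<gamma> * (h \<bullet> (x - p)) + \<gamma> * (h \<bullet> (p - z))"
    by (simp add: inner_diff_right algebra_simps)
  with near far show ?thesis by linarith
qed

lemma bregman_le_Dsq:
  assumes X: "compact X" and w: "continuous_on X w" and dw: "continuous_on X dw"
    and x: "x \<in> X" and z: "z \<in> X"
  shows "bregman w dw x z \<le> Dsq w dw X"
proof -
  have "continuous_on (X \<times> X) (\<lambda>q. bregman w dw (fst q) (snd q))"
    unfolding bregman_def
    by (intro continuous_intros continuous_on_compose2[OF w] continuous_on_compose2[OF dw]) auto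
  then have "compact ((\<lambda>q. bregman w dw (fst q) (snd q)) ` (X \<times> X))"
    using compact_Times[OF X X] by (rule compact_continuous_image)
  then have "bdd_above ((\<lambda>q. bregman w dw (fst q) (snd q)) ` (X \<times> X))"
    by (intro bounded_imp_bdd_above compact_imp_bounded)
  from cSUP_upper[OF _ this, of "(x, z)"] show ?thesis using x z unfolding Dsq_def by simp
qed

lemma mirror_descent_regret_bound:
  fixes w :: "'a::real_inner \<Rightarrow> real" and x h :: "nat \<Rightarrow> 'a"
  assumes sc: "strongly_convex1_on X w" and cx: "convex X" and X: "compact X"
    and w_diff: "\<And>y. y \<in> X \<Longrightarrow> (w has_derivative (\<lambda>h. dw y \<bullet> h)) (at y within X)"
    and dw: "continuous_on X dw"
    and z: "z \<in> X" and sN: "s \<le> N"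
    and x: "\<And>k. k \<in> {s..N} \<Longrightarrow> x k \<in> X"
    and prox: "\<And>k. k \<in> {s..N} \<Longrightarrow> is_prox w dw X (x k) (\<gamma> k *\<^sub>R h k) (x (Suc k))"
    and \<gamma>: "\<And>k. \<gamma> k \<ge> 0"
  shows "(\<Sum>k=s..N. \<gamma> k * (h k \<bullet> (x k - z)))
      \<le> Dsq w dw X + (\<Sum>k=s..N. (\<gamma> k)\<^sup>2 * (norm (h k))\<^sup>2 / 2)"
proof -
  let ?V = "\<lambda>k. bregman w dw (x k) z"
  have xSuc: "x (Suc k) \<in> X" if "k \<in> {s..N}" for k
    using prox[OF that] unfolding is_prox_def by blast
  have "(\<Sum>k=s..N. \<gamma> k * (h k \<bullet> (x k - z)))
      \<le> (\<Sum>k=s..N. ?V k - ?V (Suc k) + (\<gamma> k)\<^sup>2 * (norm (h k))\<^sup>2 / 2)"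
  proof (rule sum_mono)
    fix k assume k: "k \<in> {s..N}"
    from is_prox_descent_inequality[OF sc cx x[OF k] z w_diff[OF x[OF k]] w_diff[OF xSuc[OF k]]
        prox[OF k] \<gamma>]
    show "\<gamma> k * (h k \<bullet> (x k - z)) \<le> ?V k - ?V (Suc k) + (\<gamma> k)\<^sup>2 * (norm (h k))\<^sup>2 / 2" .
  qed
  moreover have "(\<Sum>k=s..N. ?V k - ?V (Suc k)) = ?V s - ?V (Suc N)"
  proof -
    have "(\<Sum>k=s..N. ?V k - ?V (Suc k)) = (\<Sum>k=s..<Suc N. (- ?V (Suc k)) - (- ?V k))"
      by (intro sum.cong) auto
    also have "\<dots> = - ?V (Suc N) - (- ?V s)"
      by (rule sum_Suc_diff') (use sN in simp)
    finally show ?thesis by simp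
  qed
  moreover have "?V s \<le> Dsq w dw X"
  proof (rule bregman_le_Dsq[OF X _ dw _ z])
    show "continuous_on X w"
      unfolding continuous_on_eq_continuous_within using has_derivative_continuous[OF w_diff] by blast
    show "x s \<in> X" using x sN by simp
  qed
  moreover have "0 \<le> ?V (Suc N)"
  proof -
    have xN: "x (Suc N) \<in> X" using xSuc sN by simp
    have "(norm (z - x (Suc N)))\<^sup>2 / 2 \<le> ?V (Suc N)"
      by (rule strongly_convex1_on_bregman_ge[where dw = dw, OF sc cx w_diff[OF xN] xN z])
    moreover have "0 \<le> (norm (z - x (Suc N)))\<^sup>2 / 2" by simp
    ultimately show ?thesis by linarith
  qed
  ultimately show ?thesis by (simp add: sum.distrib)
qed

lemma prox_iterates_mem:
  assumes "x 1 \<in> X" and "\<And>k. 1 \<le> k \<Longrightarrow> k \<le> N \<Longrightarrow> is_prox w dw X (x k) (y k) (x (Suc k))"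
    and "1 \<le> k" "k \<le> Suc N"
  shows "x k \<in> X"
  using assms(3,4)
proof (induction k)
  case (Suc k)
  show ?case
  proof (cases "k = 0")
    case True with assms(1) show ?thesis by simp
  next
    case False
    with Suc.prems assms(2)[of k] show ?thesis unfolding is_prox_def by auto
  qed
qed simp

lemma subgrad_inner_gt_of_violated:
  assumes "is_subgrad_on X \<phi> y v" "z \<in> X" "\<phi> z \<le> 0" "\<eta> < \<phi> y"
  shows "\<eta> < v \<bullet> (y - z)"
proof -
  have "\<phi> y + v \<bullet> (z - y) \<le> \<phi> z" using assms(1,2) unfolding is_subgrad_on_def by blast
  moreover have "v \<bullet> (z - y) = - (v \<bullet> (y - z))" by (simp add: inner_diff_right)
  ultimately show ?thesis using assms(3,4) by linarith
qed

lemma continuous_on_compact_le_SUP: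
  fixes \<phi> :: "'a::topological_space \<Rightarrow> real"
  assumes "compact D" "continuous_on D \<phi>" "d \<in> D"
  shows "\<phi> d \<le> (SUP d\<in>D. \<phi> d)"
proof -
  have "bdd_above (\<phi> ` D)"
    using assms(1,2) by (intro bounded_imp_bdd_above compact_imp_bounded compact_continuous_image)
  with assms(3) show ?thesis by (rule cSUP_upper)
qed

lemma csa_key_inequality:
  fixes x :: "nat \<Rightarrow> 'a::real_inner"
  assumes sc: "strongly_convex1_on X w" and cx: "convex X" and X: "compact X"
    and w_diff: "\<And>y. y \<in> X \<Longrightarrow> (w has_derivative (\<lambda>h. dw y \<bullet> h)) (at y within X)"
    and dw: "continuous_on X dw"
    and fp: "\<And>y. y \<in> X \<Longrightarrow> norm (fp y) \<le> Lf"
    and gp: "\<And>y d. y \<in> X \<Longrightarrow> d \<in> Delta \<Longrightarrow>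
               is_subgrad_on X (\<lambda>z. g z d) y (gp y d) \<and> norm (gp y d) \<le> LgX"
    and xstar: "xstar \<in> X" "\<And>d. d \<in> Delta \<Longrightarrow> g xstar d \<le> 0"
    and s: "1 \<le> s" "s \<le> N" and x1: "x 1 \<in> X"
    and \<gamma>: "\<And>k. \<gamma> k \<ge> 0" and \<delta>: "\<And>k. \<delta> k \<in> Delta"
    and step: "\<And>k. 1 \<le> k \<Longrightarrow> k \<le> N \<Longrightarrow>
        is_prox w dw X (x k)
          (\<gamma> k *\<^sub>R (if g (x k) (\<delta> k) \<le> \<eta> k then fp (x k) else gp (x k) (\<delta> k)))
          (x (Suc k))"
    and B_def: "B = {k \<in> {s..N}. g (x k) (\<delta> k) \<le> \<eta> k}"
    and NN_def: "NN = {s..N} - B"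
  shows "(\<Sum>k\<in>B. \<gamma> k * (fp (x k) \<bullet> (x k - xstar))) + (\<Sum>k\<in>NN. \<gamma> k * \<eta> k)
      \<le> Dsq w dw X + (1/2) * (\<Sum>k\<in>B. (\<gamma> k)\<^sup>2 * Lf\<^sup>2) + (1/2) * (\<Sum>k\<in>NN. (\<gamma> k)\<^sup>2 * LgX\<^sup>2)"
proof -
  define h where "h k = (if g (x k) (\<delta> k) \<le> \<eta> k then fp (x k) else gp (x k) (\<delta> k))" for k
  have x: "x k \<in> X" if "k \<in> {s..N}" for k
    using prox_iterates_mem[where x = x, OF x1 step] that s by auto
  have partition: "{s..N} = B \<union> NN" "B \<inter> NN = {}" "finite B" "finite NN"
    unfolding NN_def B_def by auto
  have B: "h k = fp (x k)" "k \<in> {s..N}" if "k \<in> B" for k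
    using that unfolding B_def h_def by auto
  have NN: "h k = gp (x k) (\<delta> k)" "\<eta> k < g (x k) (\<delta> k)" "k \<in> {s..N}" if "k \<in> NN" for k
    using that unfolding NN_def B_def h_def by auto
  have NN_progress: "\<gamma> k * \<eta> k \<le> \<gamma> k * (h k \<bullet> (x k - xstar))" if k: "k \<in> NN" for k
  proof -
    have "is_subgrad_on X (\<lambda>z. g z (\<delta> k)) (x k) (h k)"
      using gp[OF x[OF NN(3)[OF k]] \<delta>] NN(1)[OF k] by simp
    from subgrad_inner_gt_of_violated[OF this xstar(1) xstar(2)[OF \<delta>] NN(2)[OF k]]
    show ?thesis using \<gamma>[of k] by (simp add: mult_left_mono)
  qed
  have "(\<Sum>k\<in>B. \<gamma> k * (fp (x k) \<bullet> (x k - xstar))) + (\<Sum>k\<in>NN. \<gamma> k * \<eta> k)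
      \<le> (\<Sum>k\<in>B. \<gamma> k * (h k \<bullet> (x k - xstar))) + (\<Sum>k\<in>NN. \<gamma> k * (h k \<bullet> (x k - xstar)))"
    using B(1) NN_progress by (simp add: sum_mono)
  also have "\<dots> = (\<Sum>k=s..N. \<gamma> k * (h k \<bullet> (x k - xstar)))"
    using partition by (simp add: sum.union_disjoint)
  also have "\<dots> \<le> Dsq w dw X + (\<Sum>k=s..N. (\<gamma> k)\<^sup>2 * (norm (h k))\<^sup>2 / 2)"
  proof (rule mirror_descent_regret_bound[OF sc cx X w_diff dw xstar(1) s(2) x _ \<gamma>])
    fix k assume "k \<in> {s..N}"
    then show "is_prox w dw X (x k) (\<gamma> k *\<^sub>R h k) (x (Suc k))"
      unfolding h_def using step s by simp
  qed
  also have "(\<Sum>k=s..N. (\<gamma> k)\<^sup>2 * (norm (h k))\<^sup>2 / 2)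
      = (\<Sum>k\<in>B. (\<gamma> k)\<^sup>2 * (norm (h k))\<^sup>2 / 2) + (\<Sum>k\<in>NN. (\<gamma> k)\<^sup>2 * (norm (h k))\<^sup>2 / 2)"
    using partition by (simp add: sum.union_disjoint)
  also have "\<dots> \<le> (\<Sum>k\<in>B. (\<gamma> k)\<^sup>2 * Lf\<^sup>2 / 2) + (\<Sum>k\<in>NN. (\<gamma> k)\<^sup>2 * LgX\<^sup>2 / 2)"
  proof (intro add_mono sum_mono divide_right_mono mult_left_mono power_mono)
    fix k assume "k \<in> B"
    then show "norm (h k) \<le> Lf" using B fp x by auto
  next
    fix k assume "k \<in> NN"
    then show "norm (h k) \<le> LgX" using NN gp x \<delta> by auto
  qed auto
  finally show ?thesis by (simp add: sum_distrib_left sum_divide_distrib)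
qed

theorem mainTheorem16:
  fixes X :: "'a::euclidean_space set" and Delta :: "'b::euclidean_space set"
    and f :: "'a \<Rightarrow> real" and g :: "'a \<Rightarrow> 'b \<Rightarrow> real"
    and fp :: "'a \<Rightarrow> 'a" and gp :: "'a \<Rightarrow> 'b \<Rightarrow> 'a"
    and Lf LgX LgD :: real
    and w :: "'a \<Rightarrow> real" and dw :: "'a \<Rightarrow> 'a"
    and xstar :: 'a
    and N s :: nat and x :: "nat \<Rightarrow> 'a" and delta :: "nat \<Rightarrow> 'b"
    and eta gamma :: "nat \<Rightarrow> real"
    and B NN :: "nat set"
  assumes X: "convex X" "compact X"
    and Delta: "compact Delta"
    and f_cvx: "convex_on X f" and f_lip: "Lf-lipschitz_on X f"
    and g_cvx: "\<And>d. d \<in> Delta \<Longrightarrow> convex_on X (\<lambda>y. g y d)"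
    and g_lipX: "\<And>d. d \<in> Delta \<Longrightarrow> LgX-lipschitz_on X (\<lambda>y. g y d)"
    and g_lipD: "\<And>y. y \<in> X \<Longrightarrow> LgD-lipschitz_on Delta (\<lambda>d. g y d)"
    and fp: "\<And>y. y \<in> X \<Longrightarrow> is_subgrad_on X f y (fp y) \<and> norm (fp y) \<le> Lf"
    and gp: "\<And>y d. y \<in> X \<Longrightarrow> d \<in> Delta \<Longrightarrow>
               is_subgrad_on X (\<lambda>z. g z d) y (gp y d) \<and> norm (gp y d) \<le> LgX"
    and opt: "xstar \<in> X" "(SUP d\<in>Delta. g xstar d) \<le> 0"
        "\<And>y. y \<in> X \<Longrightarrow> (SUP d\<in>Delta. g y d) \<le> 0 \<Longrightarrow> f xstar \<le> f y"
    and w_diff: "\<And>y. y \<in> X \<Longrightarrow> (w has_derivative (\<lambda>h. dw y \<bullet> h)) (at y within X)"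
    and w_cont: "continuous_on X dw"
    and w_sc: "strongly_convex1_on X w"
    and N: "N \<ge> 1" and s: "1 \<le> s" "s \<le> N"
    and x1: "x 1 \<in> X"
    and eta: "\<And>k. eta k > 0" and gamma: "\<And>k. gamma k > 0"
    and delta: "\<And>k. delta k \<in> Delta"
    and step: "\<And>k. 1 \<le> k \<Longrightarrow> k \<le> N \<Longrightarrow>
        is_prox w dw X (x k)
          (gamma k *\<^sub>R (if g (x k) (delta k) \<le> eta k then fp (x k) else gp (x k) (delta k)))
          (x (Suc k))"
    and B_def: "B = {k \<in> {s..N}. g (x k) (delta k) \<le> eta k}"
    and NN_def: "NN = {s..N} - B"
    and cond: "NN = {} \<or>
        real (N - s + 1) / 2 * Min ((\<lambda>k. gamma k * eta k) ` NN)
          > Dsq w dw X + (1/2) * (\<Sum>k\<in>B. (gamma k)\<^sup>2 * Lf\<^sup>2)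
                       + (1/2) * (\<Sum>k\<in>NN. (gamma k)\<^sup>2 * LgX\<^sup>2)"
  shows "B \<noteq> {} \<and>
    (real (card B) \<ge> real (N - s + 1) / 2 \<or>
     (\<Sum>k\<in>B. gamma k * (fp (x k) \<bullet> (x k - xstar))) < 0)"
proof (rule ccontr)
  assume contra: "\<not> ?thesis"
  have partition: "{s..N} = B \<union> NN" "B \<inter> NN = {}" "finite B" "finite NN"
    unfolding NN_def B_def by auto
  then have card: "real (card B) + real (card NN) = real (N - s + 1)"
    using s card_Un_disjoint[of B NN] by (metis card_atLeastAtMost Suc_diff_le Suc_eq_plus1 of_nat_add)
  have B_nonneg: "0 \<le> (\<Sum>k\<in>B. gamma k * (fp (x k) \<bullet> (x k - xstar)))"
    and NN_large: "real (N - s + 1) / 2 \<le> real (card NN)"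
    using contra card by (cases "B = {}"; auto)+
  then have "NN \<noteq> {}" using s by auto
  have g_xstar: "g xstar d \<le> 0" if "d \<in> Delta" for d
    using continuous_on_compact_le_SUP[OF Delta lipschitz_on_continuous_on[OF g_lipD[OF opt(1)]] that]
      opt(2) by linarith
  define m where "m = Min ((\<lambda>k. gamma k * eta k) ` NN)"
  have "0 < m" unfolding m_def using partition \<open>NN \<noteq> {}\<close> gamma eta by simp
  have "real (N - s + 1) / 2 * m \<le> real (card NN) * m"
    using NN_large \<open>0 < m\<close> by (intro mult_right_mono) auto
  also have "\<dots> \<le> (\<Sum>k\<in>NN. gamma k * eta k)"
    unfolding m_def using partition by (intro sum_bounded_below Min_le) auto
  also have "\<dots> \<le> Dsq w dw X + (1/2) * (\<Sum>k\<in>B. (gamma k)\<^sup>2 * Lf\<^sup>2)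
                           + (1/2) * (\<Sum>k\<in>NN. (gamma k)\<^sup>2 * LgX\<^sup>2)"
  proof -
    have "(\<Sum>k\<in>B. gamma k * (fp (x k) \<bullet> (x k - xstar))) + (\<Sum>k\<in>NN. gamma k * eta k)
        \<le> Dsq w dw X + (1/2) * (\<Sum>k\<in>B. (gamma k)\<^sup>2 * Lf\<^sup>2)
                      + (1/2) * (\<Sum>k\<in>NN. (gamma k)\<^sup>2 * LgX\<^sup>2)"
      by (rule csa_key_inequality[OF w_sc X w_diff w_cont _ gp opt(1) g_xstar s x1 _ delta step
            B_def NN_def]) (use fp gamma less_imp_le in blast)+
    with B_nonneg show ?thesis by linarith
  qed
  finally show False using cond \<open>NN \<noteq> {}\<close> unfolding m_def by linarith
qed

end
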